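(* Fix $\Lambda_0,\dots,\Lambda_{N-1}\ge0$ with a unique minimizer $j_\star$ ($\Lambda_j>\Lambda_{j_\star}$ for $j\ne j_\star$), fix $\boldsymbol\Gamma^{(1)}$ irreducible, and for $\theta>0$ let $-\mu(\theta)$ be the largest eigenvalue of $\theta\boldsymbol\Theta^{(1)}-\boldsymbol\Psi$ and $-\lambda(\theta)$ the largest eigenvalue of $\theta\boldsymbol\Gamma^{(1)}-\mathrm{diag}(\Lambda_j)$. Then as $\theta\to0$, $$\mu(\theta)=2\Lambda_{j_\star}+2\theta\sum_{j\neq j_\star}\Gamma^{(1)}_{jj_\star}-4\theta^2\sum_{j\neq j_\star}\frac{(\Gamma^{(1)}_{jj_\star})^2}{\Lambda_j-\Lambda_{j_\star}}+O(\theta^3),$$ the corresponding unit eigenvector is $\mathbf W^{(0)}+\theta\mathbf W^{(1)}+O(\theta^2)$ with $W^{(0)}_{jl}=\delta_{jj_\star}\delta_{lj_\star}$, $W^{(1)}_{j_\star l}=2\Gamma^{(1)}_{j_\star l}/(\Lambda_l-\Lambda_{j_\star})$ for $l>j_\star$, $W^{(1)}_{jj_\star}=2\Gamma^{(1)}_{jj_\star}/(\Lambda_j-\Lambda_{j_\star})$ for $j<j_\star$, and $W^{(1)}_{jl}=0$ otherwise; and $$\mu(\theta)-2\lambda(\theta)=-2\theta^2\sum_{j\neq j_\star}\frac{(\Gamma^{(1)}_{jj_\star})^2}{\Lambda_j-\Lambda_{j_\star}}+O(\theta^3),$$ which is negative for $\theta$ small enough.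
   Context: Let $N\ge 2$. Let $\boldsymbol\Gamma^{(1)}=(\Gamma^{(1)}_{jl})_{j,l=0}^{N-1}$ be a real symmetric matrix with $\Gamma^{(1)}_{jl}\ge 0$ for $j\neq l$ and $\Gamma^{(1)}_{jj}=-\sum_{l\neq j}\Gamma^{(1)}_{jl}$; it is called irreducible if the graph on $\{0,\dots,N-1\}$ with an edge between $j\neq l$ whenever $\Gamma^{(1)}_{jl}>0$ is connected. Let $\mathcal T_N=\{(j,l)\in\mathbb N^2:0\le j\le l\le N-1\}$; for $\mathbf S\in\mathbb R^{\mathcal T_N}$, $S_{jl}$ with $j>l$ means $S_{lj}$. Define $(\boldsymbol\Psi\mathbf S)_{jl}=(\Lambda_j+\Lambda_l)S_{jl}$ and $(\boldsymbol\Theta^{(1)}\mathbf S)_{jl}=2\Gamma^{(1)}_{jl}\mathbf 1_{j\neq l}(S_{jj}+S_{ll}-2S_{jl})+\sum_{n\notin\{j,l\}}[\Gamma^{(1)}_{ln}(S_{jn}-S_{jl})+\Gamma^{(1)}_{jn}(S_{nl}-S_{jl})]$. *)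

theory Defs
  imports Complex_Main
begin

text \<open>Vectors in R^{T_N} are represented
  as functions nat \<times> nat \<Rightarrow> real vanishing outside T_N; vectors in R^N as
  functions nat \<Rightarrow> real vanishing outside {..<N}.\<close>

definition Tset :: "nat \<Rightarrow> (nat \<times> nat) set" where
  "Tset N = {(j, l). j \<le> l \<and> l < N}"

definition entry :: "(nat \<times> nat \<Rightarrow> real) \<Rightarrow> nat \<Rightarrow> nat \<Rightarrow> real" where
  "entry S j l = (if j \<le> l then S (j, l) else S (l, j))"

definition Psi :: "nat \<Rightarrow> (nat \<Rightarrow> real) \<Rightarrow> (nat \<times> nat \<Rightarrow> real) \<Rightarrow> (nat \<times> nat \<Rightarrow> real)" where
  "Psi N Lam S = (\<lambda>(j, l). if (j, l) \<in> Tset N then (Lam j + Lam l) * S (j, l) else 0)"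

definition Theta1 :: "nat \<Rightarrow> (nat \<Rightarrow> nat \<Rightarrow> real) \<Rightarrow> (nat \<times> nat \<Rightarrow> real) \<Rightarrow> (nat \<times> nat \<Rightarrow> real)" where
  "Theta1 N G S = (\<lambda>(j, l). if (j, l) \<in> Tset N then
      2 * G j l * (if j \<noteq> l then 1 else 0) * (entry S j j + entry S l l - 2 * entry S j l)
      + (\<Sum>n \<in> {..<N} - {j, l}. G l n * (entry S j n - entry S j l) + G j n * (entry S n l - entry S j l))
    else 0)"

definition is_eigenvalue_on :: "'a set \<Rightarrow> (('a \<Rightarrow> real) \<Rightarrow> ('a \<Rightarrow> real)) \<Rightarrow> real \<Rightarrow> bool" where
  "is_eigenvalue_on I A ev \<longleftrightarrow>
     (\<exists>v. (\<forall>x. x \<notin> I \<longrightarrow> v x = 0) \<and> (\<exists>x\<in>I. v x \<noteq> 0) \<and> (\<forall>x\<in>I. A v x = ev * v x))"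

definition largest_eigenvalue :: "'a set \<Rightarrow> (('a \<Rightarrow> real) \<Rightarrow> ('a \<Rightarrow> real)) \<Rightarrow> real" where
  "largest_eigenvalue I A = Max {ev. is_eigenvalue_on I A ev}"

definition mu :: "nat \<Rightarrow> (nat \<Rightarrow> nat \<Rightarrow> real) \<Rightarrow> (nat \<Rightarrow> real) \<Rightarrow> real \<Rightarrow> real" where
  "mu N G Lam \<theta> = - largest_eigenvalue (Tset N) (\<lambda>S p. \<theta> * Theta1 N G S p - Psi N Lam S p)"

definition lam :: "nat \<Rightarrow> (nat \<Rightarrow> nat \<Rightarrow> real) \<Rightarrow> (nat \<Rightarrow> real) \<Rightarrow> real \<Rightarrow> real" where
  "lam N G Lam \<theta> = - largest_eigenvalue {..<N} (\<lambda>v j. \<theta> * (\<Sum>l<N. G j l * v l) - Lam j * v j)"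

definition rate_matrix :: "nat \<Rightarrow> (nat \<Rightarrow> nat \<Rightarrow> real) \<Rightarrow> bool" where
  "rate_matrix N G \<longleftrightarrow>
     (\<forall>j<N. \<forall>l<N. G j l = G l j) \<and>
     (\<forall>j<N. \<forall>l<N. j \<noteq> l \<longrightarrow> G j l \<ge> 0) \<and>
     (\<forall>j<N. G j j = - (\<Sum>l \<in> {..<N} - {j}. G j l))"

definition irreducible_rate :: "nat \<Rightarrow> (nat \<Rightarrow> nat \<Rightarrow> real) \<Rightarrow> bool" where
  "irreducible_rate N G \<longleftrightarrow>
     (\<forall>j<N. \<forall>l<N. (j, l) \<in> {(a, b). a < N \<and> b < N \<and> a \<noteq> b \<and> G a b > 0}\<^sup>*)"

definition W0 :: "nat \<Rightarrow> nat \<times> nat \<Rightarrow> real" where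
  "W0 js = (\<lambda>(j, l). if j = js \<and> l = js then 1 else 0)"

definition W1 :: "(nat \<Rightarrow> nat \<Rightarrow> real) \<Rightarrow> (nat \<Rightarrow> real) \<Rightarrow> nat \<Rightarrow> nat \<times> nat \<Rightarrow> real" where
  "W1 G Lam js = (\<lambda>(j, l).
     if j = js \<and> js < l then 2 * G js l / (Lam l - Lam js)
     else if l = js \<and> j < js then 2 * G j js / (Lam j - Lam js)
     else 0)"

end

(*
  Both mu and lam are minus the top eigenvalue of a matrix A t = t B - diag d whose diagonal part
  has a unique smallest entry d s (2 Lam js on pairs, Lam js on states).  Normalising an
  eigenvector by u s = 1 and solving the other eigen-equations for u p turns the eigenproblem
  into a fixed-point problem that is a contraction for small t; its fixed point is an eigenvalue
  within t |B| of - d s, so the top eigenvalue is that close too and its eigenvectors peak at s.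
  Feeding |u p| = O(t) back into the equations gives u p = t b p s / (d p - d s) + O(t^2) and
  e = - d s + t b s s + t^2 (SUM q. b s q b q s / (d q - d s)) + O(t^3).
  For Theta1 the pairs coupled to (js, js) are exactly the (j, js), with coupling 2 G j js both
  ways, so the second-order sum on pairs is four times the one on states: the t^2 terms of mu and
  2 lam differ by -2 t^2 (SUM j. G j js^2 / (Lam j - Lam js)), which irreducibility makes negative.
*)

theory Submission
  imports Defs "Jordan_Normal_Form.Char_Poly"
begin

lemma eigenvalue_of_enumerated_matrix:
  assumes f: "bij_betw f {0..<n} I"
    and rep: "\<And>v p. (\<forall>x. x\<notin>I \<longrightarrow> v x = 0) \<Longrightarrow> p \<in> I \<Longrightarrow> A v p = (\<Sum>q\<in>I. a p q * v q)"
    and "is_eigenvalue_on I A ev"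
  shows "eigenvalue (mat n n (\<lambda>(i, k). a (f i) (f k))) ev"
proof -
  define M where "M = mat n n (\<lambda>(i, k). a (f i) (f k))"
  obtain v where v0: "\<forall>x. x\<notin>I \<longrightarrow> v x = 0" and vnz: "\<exists>x\<in>I. v x \<noteq> 0"
    and ve: "\<forall>x\<in>I. A v x = ev * v x"
    using assms(3) by (auto simp: is_eigenvalue_on_def)
  define w where "w = vec n (\<lambda>i. v (f i))"
  have "eigenvector M w ev"
    unfolding eigenvector_def
  proof (intro conjI)
    show "w \<in> carrier_vec (dim_row M)" by (simp add: w_def M_def)
    show "w \<noteq> 0\<^sub>v (dim_row M)"
    proof
      assume w0: "w = 0\<^sub>v (dim_row M)"
      obtain x where x: "x \<in> I" "v x \<noteq> 0" using vnz by blast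
      then obtain i where i: "i < n" "f i = x" using f unfolding bij_betw_def by force
      then have "w $ i = 0" using w0 by (simp add: M_def)
      then show False using x i by (simp add: w_def)
    qed
    show "M *\<^sub>v w = ev \<cdot>\<^sub>v w"
    proof (rule eq_vecI)
      fix i assume "i < dim_vec (ev \<cdot>\<^sub>v w)"
      then have i: "i < n" by (simp add: w_def)
      have fi: "f i \<in> I" using f i unfolding bij_betw_def by auto
      have "(M *\<^sub>v w) $ i = (\<Sum>k\<in>{0..<n}. a (f i) (f k) * v (f k))"
        using i by (simp add: M_def w_def mult_mat_vec_def scalar_prod_def)
      also have "\<dots> = (\<Sum>q\<in>I. a (f i) q * v q)"
        using sum.reindex_bij_betw[OF f, of "\<lambda>q. a (f i) q * v q"] by simp
      also have "\<dots> = ev * v (f i)" using rep[OF v0 fi] ve fi by simp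
      finally show "(M *\<^sub>v w) $ i = (ev \<cdot>\<^sub>v w) $ i" using i by (simp add: w_def)
    qed (simp add: w_def M_def)
  qed
  then show ?thesis unfolding M_def by (auto simp: eigenvalue_def)
qed

lemma finite_eigenvalues_on:
  assumes fin: "finite I"
    and rep: "\<And>v p. (\<forall>x. x\<notin>I \<longrightarrow> v x = 0) \<Longrightarrow> p \<in> I \<Longrightarrow> A v p = (\<Sum>q\<in>I. a p q * v q)"
  shows "finite {ev. is_eigenvalue_on I A ev}"
proof -
  obtain f where f: "bij_betw f {0..<card I} I" using ex_bij_betw_nat_finite[OF fin] by blast
  define M where "M = mat (card I) (card I) (\<lambda>(i, k). a (f i) (f k))"
  have M: "M \<in> carrier_mat (card I) (card I)" by (simp add: M_def)
  have "eigenvalue M ev" if "is_eigenvalue_on I A ev" for ev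
    unfolding M_def by (rule eigenvalue_of_enumerated_matrix[OF f _ that]) (rule rep)
  then have "{ev. is_eigenvalue_on I A ev} \<subseteq> {x. poly (char_poly M) x = 0}"
    using eigenvalue_root_char_poly[OF M] by blast
  moreover have "char_poly M \<noteq> 0" using degree_monic_char_poly[OF M] by auto
  ultimately show ?thesis using poly_roots_finite finite_subset by blast
qed

lemma is_eigenvalue_on_cong:
  assumes "\<And>v p. (\<forall>x. x \<notin> I \<longrightarrow> v x = 0) \<Longrightarrow> p \<in> I \<Longrightarrow> A v p = A' v p"
  shows "is_eigenvalue_on I A = is_eigenvalue_on I A'"
  unfolding is_eigenvalue_on_def by (intro ext iff_exI) (use assms in auto)

lemma linear_fun_expansion:
  fixes A :: "('a \<Rightarrow> real) \<Rightarrow> 'a \<Rightarrow> real"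
  assumes fin: "finite I"
    and add: "\<And>v w. A (\<lambda>x. v x + w x) = (\<lambda>x. A v x + A w x)"
    and scale: "\<And>c v. A (\<lambda>x. c * v x) = (\<lambda>x. c * A v x)"
    and supp: "\<forall>x. x \<notin> I \<longrightarrow> v x = 0"
  shows "A v p = (\<Sum>q\<in>I. v q * A (\<lambda>x. if x = q then 1 else 0) p)"
proof -
  have expand: "A (\<lambda>x. \<Sum>q\<in>F. v q * (if x = q then 1 else 0)) p
        = (\<Sum>q\<in>F. v q * A (\<lambda>x. if x = q then 1 else 0) p)" if "finite F" for F
    using that
  proof (induction F rule: finite_induct)
    case empty
    show ?case using scale[of 0 "\<lambda>x. 0"] by simp
  next
    case (insert q F)
    then have "(\<lambda>x. \<Sum>q\<in>insert q F. v q * (if x = q then 1 else 0))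
        = (\<lambda>x. v q * (if x = q then 1 else 0) + (\<Sum>q\<in>F. v q * (if x = q then 1 else 0)))"
      by simp
    then show ?case using insert by (simp add: add scale)
  qed
  have v_eq: "v = (\<lambda>x. \<Sum>q\<in>I. v q * (if x = q then 1 else 0))"
  proof
    fix x
    have "(\<Sum>q\<in>I. v q * (if x = q then 1 else 0)) = (\<Sum>q\<in>I. if x = q then v q else 0)"
      by (rule sum.cong) auto
    then show "v x = (\<Sum>q\<in>I. v q * (if x = q then 1 else 0))"
      using fin supp by (simp add: sum.delta)
  qed
  show ?thesis using arg_cong[where f = "\<lambda>f. A f p", OF v_eq] expand[OF fin] by simp
qed

lemma abs_divide_le_of_le:
  fixes X a c B :: real
  assumes "0 < c" "c \<le> a" "\<bar>X\<bar> \<le> B"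
  shows "\<bar>X / a\<bar> \<le> B / c"
proof -
  have "\<bar>X / a\<bar> = \<bar>X\<bar> / a" using assms by simp
  also have "\<dots> \<le> B / a" using assms by (simp add: divide_right_mono)
  also have "\<dots> \<le> B / c" using assms by (intro divide_left_mono) auto
  finally show ?thesis .
qed

lemma abs_quotient_diff_le:
  fixes X X0 a a0 g K t r :: real
  assumes g: "0 < g" and a0: "g \<le> a0" and a: "3 * g / 4 \<le> a"
    and at: "\<bar>a - a0\<bar> \<le> t" and Xr: "\<bar>X - X0\<bar> \<le> r" and X0: "\<bar>X0\<bar> \<le> K"
  shows "\<bar>X / a - X0 / a0\<bar> \<le> 4 / 3 * (r / g + K * t / g\<^sup>2)"
proof -
  have "X / a - X0 / a0 = (X - X0) / a + X0 * (a0 - a) / (a * a0)"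
    using g a a0 by (simp add: field_simps)
  then have "\<bar>X / a - X0 / a0\<bar> \<le> \<bar>(X - X0) / a\<bar> + \<bar>X0 * (a0 - a) / (a * a0)\<bar>"
    by (metis abs_triangle_ineq)
  moreover have "\<bar>(X - X0) / a\<bar> \<le> r / (3 * g / 4)"
    using g a Xr by (intro abs_divide_le_of_le) auto
  moreover have "\<bar>X0 * (a0 - a)\<bar> \<le> K * t"
    using X0 at by (simp add: abs_mult abs_minus_commute mult_mono')
  then have "\<bar>X0 * (a0 - a) / (a * a0)\<bar> \<le> K * t / (3 * g / 4 * g)"
    using g a a0 by (intro abs_divide_le_of_le mult_mono) auto
  moreover have "r / (3 * g / 4) + K * t / (3 * g / 4 * g) = 4 / 3 * (r / g + K * t / g\<^sup>2)"
    using g by (simp add: field_simps power2_eq_square)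
  ultimately show ?thesis by linarith
qed

lemma geometric_Cauchy_limit:
  fixes a :: "nat \<Rightarrow> real"
  assumes step: "\<And>k. \<bar>a (Suc k) - a k\<bar> \<le> C * (1 / 2) ^ k"
  obtains l where "a \<longlonglongrightarrow> l" and "\<And>k. \<bar>l - a k\<bar> \<le> 2 * C * (1 / 2) ^ k"
proof -
  have tail: "\<bar>a (k + j) - a k\<bar> \<le> 2 * C * (1 / 2) ^ k - 2 * C * (1 / 2) ^ (k + j)" for k j
  proof (induction j)
    case (Suc j)
    have "\<bar>a (k + Suc j) - a k\<bar> \<le> \<bar>a (Suc (k + j)) - a (k + j)\<bar> + \<bar>a (k + j) - a k\<bar>"
      by simp
    also have "\<dots> \<le> C * (1 / 2) ^ (k + j) + (2 * C * (1 / 2) ^ k - 2 * C * (1 / 2) ^ (k + j))"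
      using step Suc by (intro add_mono)
    finally show ?case by simp
  qed simp
  have "0 \<le> C" using order_trans[OF abs_ge_zero step[of 0]] by simp
  have close: "\<bar>a m - a k\<bar> \<le> 2 * C * (1 / 2) ^ k" if "k \<le> m" for k m
  proof -
    have "0 \<le> 2 * C * (1 / 2 :: real) ^ m" using \<open>0 \<le> C\<close> by simp
    then show ?thesis using tail[of k "m - k"] that by simp
  qed
  have "Cauchy a"
  proof (rule metric_CauchyI)
    fix e :: real assume "0 < e"
    moreover have "(\<lambda>k. 4 * C * (1 / 2) ^ k) \<longlonglongrightarrow> 4 * C * 0"
      by (intro tendsto_mult tendsto_const LIMSEQ_power_zero) auto
    ultimately have "eventually (\<lambda>k. 4 * C * (1 / 2) ^ k < e) sequentially"
      by (simp add: order_tendsto_iff)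
    then obtain M where "4 * C * (1 / 2) ^ M < e" by (auto simp: eventually_sequentially)
    then have "dist (a m) (a n) < e" if "M \<le> m" "M \<le> n" for m n
      using close[OF that(1)] close[OF that(2)] by (simp add: dist_real_def)
    then show "\<exists>M. \<forall>m\<ge>M. \<forall>n\<ge>M. dist (a m) (a n) < e" by blast
  qed
  then obtain l where l: "a \<longlonglongrightarrow> l" by (auto simp: Cauchy_convergent_iff convergent_def)
  have "\<bar>l - a k\<bar> \<le> 2 * C * (1 / 2) ^ k" for k
    by (rule LIMSEQ_le_const2[of "\<lambda>m. \<bar>a m - a k\<bar>"])
      (use close in \<open>auto intro!: tendsto_rabs tendsto_diff l\<close>)
  with l show thesis by (rule that)
qed

context
  fixes F :: "('a \<Rightarrow> real) \<Rightarrow> 'a \<Rightarrow> real" and U :: "('a \<Rightarrow> real) set" and B :: real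
  assumes maps: "\<And>u. u \<in> U \<Longrightarrow> F u \<in> U"
    and bounded: "\<And>u x. u \<in> U \<Longrightarrow> \<bar>u x\<bar> \<le> B"
    and contraction: "\<And>u w \<delta> x. u \<in> U \<Longrightarrow> w \<in> U \<Longrightarrow> (\<And>y. \<bar>u y - w y\<bar> \<le> \<delta>) \<Longrightarrow>
      \<bar>F u x - F w x\<bar> \<le> \<delta> / 2"
begin

lemma iterates_in: "start \<in> U \<Longrightarrow> (F ^^ k) start \<in> U"
  by (induction k) (simp_all add: maps)

lemma iterate_step:
  assumes "start \<in> U"
  shows "\<bar>(F ^^ Suc k) start x - (F ^^ k) start x\<bar> \<le> 2 * B * (1 / 2) ^ k"
proof (induction k arbitrary: x)
  case 0
  have "\<bar>(F ^^ Suc 0) start x\<bar> \<le> B" "\<bar>(F ^^ 0) start x\<bar> \<le> B"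
    by (rule bounded[OF iterates_in[OF assms]])+
  then show ?case by simp
next
  case (Suc k)
  have "\<bar>F ((F ^^ Suc k) start) x - F ((F ^^ k) start) x\<bar> \<le> 2 * B * (1 / 2) ^ k / 2"
    by (rule contraction[OF iterates_in[OF assms] iterates_in[OF assms]]) (rule Suc.IH)
  then show ?case by (simp add: mult.assoc)
qed

text \<open>Banach's fixed-point theorem for the sup-distance, phrased pointwise because the function
  space \<open>'a \<Rightarrow> real\<close> carries no metric.\<close>
lemma contraction_fixpoint_pointwise:
  assumes start: "start \<in> U"
    and closed: "\<And>\<sigma> u. (\<And>k. \<sigma> k \<in> U) \<Longrightarrow> (\<And>x. (\<lambda>k. \<sigma> k x) \<longlonglongrightarrow> u x) \<Longrightarrow> u \<in> U"
  shows "\<exists>u\<in>U. F u = u"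
proof -
  define \<sigma> where "\<sigma> k = (F ^^ k) start" for k
  have \<sigma>U: "\<sigma> k \<in> U" for k unfolding \<sigma>_def by (rule iterates_in[OF start])
  have step: "\<bar>\<sigma> (Suc k) x - \<sigma> k x\<bar> \<le> 2 * B * (1 / 2) ^ k" for k x
    unfolding \<sigma>_def by (rule iterate_step[OF start])
  have limits: "\<forall>x. \<exists>l. (\<lambda>k. \<sigma> k x) \<longlonglongrightarrow> l \<and> (\<forall>k. \<bar>l - \<sigma> k x\<bar> \<le> 2 * (2 * B) * (1 / 2) ^ k)"
  proof
    fix x
    obtain l where "(\<lambda>k. \<sigma> k x) \<longlonglongrightarrow> l" "\<And>k. \<bar>l - \<sigma> k x\<bar> \<le> 2 * (2 * B) * (1 / 2) ^ k"
      by (rule geometric_Cauchy_limit[of "\<lambda>k. \<sigma> k x" "2 * B", OF step]) blast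
    then show "\<exists>l. (\<lambda>k. \<sigma> k x) \<longlonglongrightarrow> l \<and> (\<forall>k. \<bar>l - \<sigma> k x\<bar> \<le> 2 * (2 * B) * (1 / 2) ^ k)"
      by blast
  qed
  obtain u where lim: "\<And>x. (\<lambda>k. \<sigma> k x) \<longlonglongrightarrow> u x"
    and near: "\<And>x k. \<bar>u x - \<sigma> k x\<bar> \<le> 2 * (2 * B) * (1 / 2) ^ k"
    using choice[OF limits] by blast
  have uU: "u \<in> U" using closed[OF \<sigma>U lim] .
  have "F u x = u x" for x
  proof -
    have "\<bar>F u x - u x\<bar> \<le> 4 * B * (1 / 2) ^ k" for k
    proof -
      have "\<bar>F u x - F (\<sigma> k) x\<bar> \<le> 2 * (2 * B) * (1 / 2) ^ k / 2"
        by (rule contraction[OF uU \<sigma>U]) (rule near)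
      moreover have "\<bar>\<sigma> (Suc k) x - u x\<bar> \<le> 2 * (2 * B) * (1 / 2) ^ Suc k"
        by (subst abs_minus_commute) (rule near)
      ultimately show ?thesis by (simp add: \<sigma>_def)
    qed
    moreover have "(\<lambda>k. 4 * B * (1 / 2) ^ k) \<longlonglongrightarrow> (0::real)"
      by (intro tendsto_mult_right_zero LIMSEQ_power_zero) auto
    ultimately have "\<bar>F u x - u x\<bar> \<le> 0"
      by (intro LIMSEQ_le_const[of "\<lambda>k. 4 * B * (1 / 2) ^ k"]) auto
    then show ?thesis by simp
  qed
  with uU show ?thesis by blast
qed

end

definition approx_to_order :: "nat \<Rightarrow> (real \<Rightarrow> real) \<Rightarrow> (real \<Rightarrow> real) \<Rightarrow> bool" where
  "approx_to_order n f g \<longleftrightarrow> (\<exists>C>0. \<exists>\<delta>>0. \<forall>\<theta>. 0 < \<theta> \<and> \<theta> < \<delta> \<longrightarrow> \<bar>f \<theta> - g \<theta>\<bar> \<le> C * \<theta> ^ n)"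

lemma approx_to_orderI:
  assumes "0 < \<delta>" and "\<And>\<theta>. 0 < \<theta> \<Longrightarrow> \<theta> < \<delta> \<Longrightarrow> \<bar>f \<theta> - g \<theta>\<bar> \<le> C * \<theta> ^ n"
  shows "approx_to_order n f g"
  unfolding approx_to_order_def
proof (intro exI conjI allI impI)
  show "0 < max C 1" "0 < \<delta>" by (simp_all add: assms(1))
  fix \<theta> :: real assume \<theta>: "0 < \<theta> \<and> \<theta> < \<delta>"
  then have "\<bar>f \<theta> - g \<theta>\<bar> \<le> C * \<theta> ^ n" using assms(2) by blast
  also have "\<dots> \<le> max C 1 * \<theta> ^ n" using \<theta> by (intro mult_right_mono) auto
  finally show "\<bar>f \<theta> - g \<theta>\<bar> \<le> max C 1 * \<theta> ^ n" .
qed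

lemma approx_to_order_combine:
  assumes "approx_to_order n f1 g1" and "approx_to_order n f2 g2"
    and "\<And>\<theta>. f \<theta> - g \<theta> = a * (f1 \<theta> - g1 \<theta>) + c * (f2 \<theta> - g2 \<theta>)"
  shows "approx_to_order n f g"
proof -
  obtain C1 \<delta>1 C2 \<delta>2 where "0 < \<delta>1" "0 < \<delta>2"
    and b1: "\<And>\<theta>. 0 < \<theta> \<Longrightarrow> \<theta> < \<delta>1 \<Longrightarrow> \<bar>f1 \<theta> - g1 \<theta>\<bar> \<le> C1 * \<theta> ^ n"
    and b2: "\<And>\<theta>. 0 < \<theta> \<Longrightarrow> \<theta> < \<delta>2 \<Longrightarrow> \<bar>f2 \<theta> - g2 \<theta>\<bar> \<le> C2 * \<theta> ^ n"
    using assms(1,2) unfolding approx_to_order_def by blast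
  show ?thesis
  proof (rule approx_to_orderI[of "min \<delta>1 \<delta>2"])
    fix \<theta> :: real assume \<theta>: "0 < \<theta>" "\<theta> < min \<delta>1 \<delta>2"
    have "\<bar>f \<theta> - g \<theta>\<bar> \<le> \<bar>a\<bar> * \<bar>f1 \<theta> - g1 \<theta>\<bar> + \<bar>c\<bar> * \<bar>f2 \<theta> - g2 \<theta>\<bar>"
      unfolding assms(3) abs_mult[symmetric] by (rule abs_triangle_ineq)
    also have "\<dots> \<le> \<bar>a\<bar> * (C1 * \<theta> ^ n) + \<bar>c\<bar> * (C2 * \<theta> ^ n)"
      using \<theta> b1 b2 by (intro add_mono mult_left_mono) auto
    finally show "\<bar>f \<theta> - g \<theta>\<bar> \<le> (\<bar>a\<bar> * C1 + \<bar>c\<bar> * C2) * \<theta> ^ n"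
      by (simp add: algebra_simps)
  qed (use \<open>0 < \<delta>1\<close> \<open>0 < \<delta>2\<close> in simp)
qed

lemma approx_to_order_negative:
  assumes "approx_to_order 3 f g" and "0 < c" and "\<And>\<theta>. g \<theta> \<le> - c * \<theta>\<^sup>2"
  shows "\<exists>\<delta>>0. \<forall>\<theta>. 0 < \<theta> \<and> \<theta> < \<delta> \<longrightarrow> f \<theta> < 0"
proof -
  obtain C \<delta> where "0 < C" "0 < \<delta>"
    and b: "\<And>\<theta>. 0 < \<theta> \<Longrightarrow> \<theta> < \<delta> \<Longrightarrow> \<bar>f \<theta> - g \<theta>\<bar> \<le> C * \<theta> ^ 3"
    using assms(1) unfolding approx_to_order_def by blast
  have "f \<theta> < 0" if \<theta>: "0 < \<theta>" "\<theta> < min \<delta> (c / C)" for \<theta>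
  proof -
    have "C * \<theta> < c" using \<theta> \<open>0 < C\<close> by (simp add: field_simps)
    then have "C * \<theta> ^ 3 < c * \<theta>\<^sup>2"
      using \<theta> by (simp add: power2_eq_square power3_eq_cube)
    then show ?thesis using b[of \<theta>] assms(3)[of \<theta>] \<theta> by simp
  qed
  then show ?thesis using \<open>0 < \<delta>\<close> \<open>0 < C\<close> assms(2) by (intro exI[of _ "min \<delta> (c / C)"]) auto
qed

lemma unit_rescaling_close:
  fixes u :: "'a \<Rightarrow> real" and \<epsilon> :: real
  assumes "finite I" "s \<in> I" "u s = 1" "\<And>p. p \<in> I \<Longrightarrow> \<bar>u p\<bar> \<le> 1"
    and small: "\<And>p. p \<in> I \<Longrightarrow> p \<noteq> s \<Longrightarrow> \<bar>u p\<bar> \<le> \<epsilon>"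
  defines "r \<equiv> sqrt (\<Sum>q\<in>I. (u q)\<^sup>2)"
  shows "(\<Sum>p\<in>I. (u p / r)\<^sup>2) = 1" and "\<And>p. p \<in> I \<Longrightarrow> \<bar>u p / r - u p\<bar> \<le> real (card I) * \<epsilon>\<^sup>2"
proof -
  have split: "(\<Sum>q\<in>I. (u q)\<^sup>2) = 1 + (\<Sum>q\<in>I - {s}. (u q)\<^sup>2)"
    using sum.remove[OF assms(1,2), of "\<lambda>q. (u q)\<^sup>2"] assms(3) by simp
  then have one_le: "1 \<le> (\<Sum>q\<in>I. (u q)\<^sup>2)" by (simp add: sum_nonneg)
  then have r1: "1 \<le> r" and r2: "r\<^sup>2 = (\<Sum>q\<in>I. (u q)\<^sup>2)" unfolding r_def by simp_all
  show "(\<Sum>p\<in>I. (u p / r)\<^sup>2) = 1"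
    using one_le by (simp add: power_divide sum_divide_distrib[symmetric] r2)
  have "(u q)\<^sup>2 \<le> \<epsilon>\<^sup>2" if "q \<in> I - {s}" for q
    using power_mono[OF small abs_ge_zero, of q 2] that by simp
  then have "(\<Sum>q\<in>I - {s}. (u q)\<^sup>2) \<le> real (card (I - {s})) * \<epsilon>\<^sup>2"
    using sum_mono[of "I - {s}" "\<lambda>q. (u q)\<^sup>2" "\<lambda>q. \<epsilon>\<^sup>2"] by simp
  also have "\<dots> \<le> real (card I) * \<epsilon>\<^sup>2"
    using card_mono[OF assms(1), of "I - {s}"] by (intro mult_right_mono) auto
  finally have r2_le: "r\<^sup>2 - 1 \<le> real (card I) * \<epsilon>\<^sup>2" using r2 split by simp
  fix p assume "p \<in> I"
  have "u p / r - u p = - (u p * ((r - 1) / r))" using r1 by (simp add: field_simps)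
  moreover have "\<bar>(r - 1) / r\<bar> = (r - 1) / r" using r1 by simp
  ultimately have "\<bar>u p / r - u p\<bar> = \<bar>u p\<bar> * ((r - 1) / r)" by (simp only: abs_minus_cancel abs_mult)
  also have "\<dots> \<le> 1 * ((r - 1) / r)"
    using r1 assms(4)[OF \<open>p \<in> I\<close>] by (intro mult_right_mono) auto
  also have "\<dots> \<le> (r - 1) / 1" using divide_left_mono[of 1 r "r - 1"] r1 by simp
  also have "\<dots> \<le> r\<^sup>2 - 1" using r1 by (simp add: power2_eq_square)
  finally show "\<bar>u p / r - u p\<bar> \<le> real (card I) * \<epsilon>\<^sup>2" using r2_le by linarith
qed

locale gapped_perturbation =
  fixes I :: "'a set" and s :: 'a and b :: "'a \<Rightarrow> 'a \<Rightarrow> real" and d :: "'a \<Rightarrow> real"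
  assumes finite_I: "finite I" and s_in_I: "s \<in> I"
    and bottom_simple: "\<And>p. p \<in> I \<Longrightarrow> p \<noteq> s \<Longrightarrow> d s < d p"
begin

text \<open>The summands \<open>1\<close> keep \<open>gap\<close> well defined when \<open>I = {s}\<close> and \<open>row_bound\<close> positive
  when \<open>b = 0\<close>.\<close>
definition gap :: real where
  "gap = Min (insert 1 ((\<lambda>p. d p - d s) ` (I - {s})))"

definition row_bound :: real where
  "row_bound = 1 + (\<Sum>p\<in>I. \<Sum>q\<in>I. \<bar>b p q\<bar>)"

definition B :: "('a \<Rightarrow> real) \<Rightarrow> 'a \<Rightarrow> real" where
  "B v p = (\<Sum>q\<in>I. b p q * v q)"

definition A :: "real \<Rightarrow> ('a \<Rightarrow> real) \<Rightarrow> 'a \<Rightarrow> real" where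
  "A t v p = t * B v p - d p * v p"

lemma gap_pos: "0 < gap"
  unfolding gap_def using finite_I bottom_simple by (subst Min_gr_iff) auto

lemma gap_le: "p \<in> I \<Longrightarrow> p \<noteq> s \<Longrightarrow> d s + gap \<le> d p"
proof -
  assume "p \<in> I" "p \<noteq> s"
  then have "gap \<le> d p - d s" unfolding gap_def using finite_I by (intro Min_le) auto
  then show ?thesis by simp
qed

lemma row_sum_le: "p \<in> I \<Longrightarrow> (\<Sum>q\<in>I. \<bar>b p q\<bar>) \<le> row_bound"
proof -
  assume "p \<in> I"
  then have "(\<Sum>q\<in>I. \<bar>b p q\<bar>) \<le> (\<Sum>p\<in>I. \<Sum>q\<in>I. \<bar>b p q\<bar>)"
    using finite_I by (intro member_le_sum sum_nonneg) auto
  then show ?thesis unfolding row_bound_def by simp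
qed

lemma row_bound_pos: "0 < row_bound"
  unfolding row_bound_def by (intro add_pos_nonneg sum_nonneg) auto

lemma entry_le_row_bound: "p \<in> I \<Longrightarrow> q \<in> I \<Longrightarrow> \<bar>b p q\<bar> \<le> row_bound"
  using row_sum_le[of p] member_le_sum[of q I "\<lambda>q. \<bar>b p q\<bar>"] finite_I by auto

lemma partial_row_le:
  assumes "J \<subseteq> I" "p \<in> I" "0 \<le> M" "\<And>q. q \<in> J \<Longrightarrow> \<bar>v q\<bar> \<le> M"
  shows "\<bar>\<Sum>q\<in>J. b p q * v q\<bar> \<le> row_bound * M"
proof -
  have "\<bar>\<Sum>q\<in>J. b p q * v q\<bar> \<le> (\<Sum>q\<in>J. \<bar>b p q\<bar> * M)"
    using assms(4) by (intro order_trans[OF sum_abs] sum_mono) (auto simp: abs_mult mult_left_mono)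
  also have "\<dots> \<le> (\<Sum>q\<in>I. \<bar>b p q\<bar>) * M"
    using assms(1,3) finite_I by (auto simp: sum_distrib_right[symmetric] intro!: mult_right_mono sum_mono2)
  also have "\<dots> \<le> row_bound * M" using row_sum_le[OF assms(2)] assms(3) by (rule mult_right_mono)
  finally show ?thesis .
qed

lemma B_le: "(\<And>q. q \<in> I \<Longrightarrow> \<bar>v q\<bar> \<le> M) \<Longrightarrow> p \<in> I \<Longrightarrow> \<bar>B v p\<bar> \<le> row_bound * M"
proof -
  assume v: "\<And>q. q \<in> I \<Longrightarrow> \<bar>v q\<bar> \<le> M" and "p \<in> I"
  have "0 \<le> M" using v[OF s_in_I] by linarith
  then show ?thesis unfolding B_def using v \<open>p \<in> I\<close> by (intro partial_row_le) auto
qed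

lemma B_split: "B v p = b p s * v s + (\<Sum>q\<in>I - {s}. b p q * v q)"
  unfolding B_def using sum.remove[OF finite_I s_in_I] by simp

lemma B_diff: "B u p - B w p = B (\<lambda>q. u q - w q) p"
  unfolding B_def by (simp add: sum_subtractf algebra_simps)

lemma A_scale: "A t (\<lambda>q. c * v q) p = c * A t v p"
  unfolding A_def B_def by (simp add: sum_distrib_left algebra_simps)

lemma A_matrix: "p \<in> I \<Longrightarrow> A t v p = (\<Sum>q\<in>I. (t * b p q - (if p = q then d p else 0)) * v q)"
proof -
  assume "p \<in> I"
  have "(\<Sum>q\<in>I. (t * b p q - (if p = q then d p else 0)) * v q)
      = (\<Sum>q\<in>I. t * (b p q * v q) - (if p = q then d p * v q else 0))"
    by (rule sum.cong) (auto simp: algebra_simps)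
  also have "\<dots> = A t v p"
    unfolding A_def B_def sum_subtractf sum_distrib_left using \<open>p \<in> I\<close> finite_I by (simp add: sum.delta)
  finally show ?thesis ..
qed

lemma finite_eigenvalues_A: "finite {e. is_eigenvalue_on I (A t) e}"
  using finite_eigenvalues_on[OF finite_I A_matrix] .

context
  fixes t e :: real and u :: "'a \<Rightarrow> real"
  assumes t_pos: "0 < t" and t_small: "t * row_bound \<le> gap / 8"
    and u_s: "u s = 1" and u_le: "\<And>p. p \<in> I \<Longrightarrow> \<bar>u p\<bar> \<le> 1"
    and eigen: "\<And>p. p \<in> I \<Longrightarrow> A t u p = e * u p"
begin

lemma eigenvalue_eq: "e = - d s + t * B u s"
  using eigen[OF s_in_I] u_s by (simp add: A_def)

lemma B_eigvec_le: "p \<in> I \<Longrightarrow> \<bar>t * B u p\<bar> \<le> t * row_bound"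
  using B_le[of u 1 p] u_le t_pos by (simp add: abs_mult)

lemma eigenvalue_near_bottom: "\<bar>e + d s\<bar> \<le> t * row_bound"
  using B_eigvec_le[OF s_in_I] eigenvalue_eq by simp

lemma shifted_eigenvalue_ge: "p \<in> I \<Longrightarrow> p \<noteq> s \<Longrightarrow> 7 * gap / 8 \<le> e + d p"
  using gap_le[of p] eigenvalue_near_bottom t_small by linarith

lemma eigvec_entry_eq:
  assumes "p \<in> I" "p \<noteq> s"
  shows "u p = t * B u p / (e + d p)"
proof -
  have "0 < e + d p" using shifted_eigenvalue_ge[OF assms] gap_pos by linarith
  moreover have "t * B u p = (e + d p) * u p" using eigen[OF assms(1)] by (simp add: A_def algebra_simps)
  ultimately show ?thesis by (simp add: field_simps)
qed

lemma eigvec_entry_le: "p \<in> I \<Longrightarrow> p \<noteq> s \<Longrightarrow> \<bar>u p\<bar> \<le> 2 * t * row_bound / gap"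
proof -
  assume p: "p \<in> I" "p \<noteq> s"
  have "\<bar>t * B u p / (e + d p)\<bar> \<le> t * row_bound / (7 * gap / 8)"
    using B_eigvec_le[OF p(1)] shifted_eigenvalue_ge[OF p] gap_pos by (intro abs_divide_le_of_le) auto
  also have "\<dots> \<le> 2 * t * row_bound / gap"
    using gap_pos t_pos row_bound_pos by (simp add: field_simps)
  finally show ?thesis using eigvec_entry_eq[OF p] by simp
qed

lemma eigvec_entry_expansion:
  assumes p: "p \<in> I" "p \<noteq> s"
  shows "\<bar>u p - t * b p s / (d p - d s)\<bar> \<le> 4 * row_bound\<^sup>2 / gap\<^sup>2 * t\<^sup>2"
proof -
  have "\<bar>\<Sum>q\<in>I - {s}. b p q * u q\<bar> \<le> row_bound * (2 * t * row_bound / gap)"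
    by (rule partial_row_le) (use eigvec_entry_le p t_pos row_bound_pos gap_pos in auto)
  then have "\<bar>B u p - b p s\<bar> \<le> row_bound * (2 * t * row_bound / gap)"
    unfolding B_split[of u p] u_s by simp
  then have "\<bar>B u p / (e + d p) - b p s / (d p - d s)\<bar>
      \<le> 4 / 3 * (row_bound * (2 * t * row_bound / gap) / gap + row_bound * (t * row_bound) / gap\<^sup>2)"
    using gap_pos gap_le[OF p] shifted_eigenvalue_ge[OF p] eigenvalue_near_bottom
      entry_le_row_bound[OF p(1) s_in_I]
    by (intro abs_quotient_diff_le) auto
  also have "\<dots> = 4 * row_bound\<^sup>2 / gap\<^sup>2 * t"
    using gap_pos by (simp add: field_simps power2_eq_square)
  finally have "t * \<bar>B u p / (e + d p) - b p s / (d p - d s)\<bar> \<le> t * (4 * row_bound\<^sup>2 / gap\<^sup>2 * t)"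
    using t_pos by (intro mult_left_mono) auto
  moreover have "u p - t * b p s / (d p - d s) = t * (B u p / (e + d p) - b p s / (d p - d s))"
    using eigvec_entry_eq[OF p] by (simp add: algebra_simps)
  ultimately show ?thesis using t_pos by (simp add: abs_mult power2_eq_square mult_ac)
qed

lemma eigenvalue_expansion:
  "\<bar>e - (- d s + t * b s s + t\<^sup>2 * (\<Sum>q\<in>I - {s}. b s q * b q s / (d q - d s)))\<bar>
     \<le> 4 * row_bound ^ 3 / gap\<^sup>2 * t ^ 3"
proof -
  have "e - (- d s + t * b s s + t\<^sup>2 * (\<Sum>q\<in>I - {s}. b s q * b q s / (d q - d s)))
      = t * (\<Sum>q\<in>I - {s}. b s q * (u q - t * b q s / (d q - d s)))"
    using eigenvalue_eq B_split[of u s] u_s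
    by (simp add: algebra_simps sum_subtractf sum_distrib_left power2_eq_square)
  then have "\<bar>e - (- d s + t * b s s + t\<^sup>2 * (\<Sum>q\<in>I - {s}. b s q * b q s / (d q - d s)))\<bar>
      = t * \<bar>\<Sum>q\<in>I - {s}. b s q * (u q - t * b q s / (d q - d s))\<bar>"
    using t_pos by (simp add: abs_mult)
  also have "\<dots> \<le> t * (row_bound * (4 * row_bound\<^sup>2 / gap\<^sup>2 * t\<^sup>2))"
    using eigvec_entry_expansion s_in_I t_pos by (intro mult_left_mono partial_row_le) auto
  also have "\<dots> = 4 * row_bound ^ 3 / gap\<^sup>2 * t ^ 3"
    by (simp add: power2_eq_square power3_eq_cube)
  finally show ?thesis .
qed

lemma rescaled_eigvec_expansion:
  defines "r \<equiv> sqrt (\<Sum>q\<in>I. (u q)\<^sup>2)"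
  shows "(\<Sum>p\<in>I. (u p / r)\<^sup>2) = 1"
    and "p \<in> I \<Longrightarrow> \<bar>u p / r - (if p = s then 1 else t * b p s / (d p - d s))\<bar>
      \<le> (1 + real (card I)) * (4 * row_bound\<^sup>2 / gap\<^sup>2) * t\<^sup>2"
proof -
  have R: "(\<Sum>p\<in>I. (u p / r)\<^sup>2) = 1"
    "\<And>p. p \<in> I \<Longrightarrow> \<bar>u p / r - u p\<bar> \<le> real (card I) * (2 * t * row_bound / gap)\<^sup>2"
    using unit_rescaling_close[where I = I and s = s and u = u and \<epsilon> = "2 * t * row_bound / gap"]
      finite_I s_in_I u_s u_le eigvec_entry_le
    unfolding r_def by blast+
  then show "(\<Sum>p\<in>I. (u p / r)\<^sup>2) = 1" by blast
  have eps: "(2 * t * row_bound / gap)\<^sup>2 = 4 * row_bound\<^sup>2 / gap\<^sup>2 * t\<^sup>2"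
    by (simp add: power2_eq_square)
  assume p: "p \<in> I"
  show "\<bar>u p / r - (if p = s then 1 else t * b p s / (d p - d s))\<bar>
      \<le> (1 + real (card I)) * (4 * row_bound\<^sup>2 / gap\<^sup>2) * t\<^sup>2"
  proof (cases "p = s")
    case True
    have "\<bar>u p / r - u p\<bar> \<le> real (card I) * (4 * row_bound\<^sup>2 / gap\<^sup>2 * t\<^sup>2)"
      using R(2)[OF p] by (simp only: eps)
    also have "\<dots> \<le> real (card I) * (4 * row_bound\<^sup>2 / gap\<^sup>2 * t\<^sup>2) + 4 * row_bound\<^sup>2 / gap\<^sup>2 * t\<^sup>2"
      by simp
    finally show ?thesis using True u_s by (simp add: algebra_simps add_divide_distrib)
  next
    case False
    have "\<bar>u p / r - t * b p s / (d p - d s)\<bar>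
        \<le> \<bar>u p / r - u p\<bar> + \<bar>u p - t * b p s / (d p - d s)\<bar>"
      using abs_triangle_ineq[of "u p / r - u p" "u p - t * b p s / (d p - d s)"] by simp
    also have "\<dots> \<le> real (card I) * (4 * row_bound\<^sup>2 / gap\<^sup>2 * t\<^sup>2) + 4 * row_bound\<^sup>2 / gap\<^sup>2 * t\<^sup>2"
      using R(2)[OF p] eigvec_entry_expansion[OF p False] by (intro add_mono) (simp_all add: eps)
    finally show ?thesis using False by (simp add: algebra_simps add_divide_distrib)
  qed
qed

end

definition normalized_vectors :: "('a \<Rightarrow> real) set" where
  "normalized_vectors = {u. u s = 1 \<and> (\<forall>p. p \<notin> I \<longrightarrow> u p = 0) \<and> (\<forall>p\<in>I. \<bar>u p\<bar> \<le> 1)}"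

text \<open>Solving the \<open>p\<close>-th eigen-equation of \<open>A t\<close> for \<open>u p\<close>, with the eigenvalue
  \<open>- d s + t * B u s\<close> read off from the \<open>s\<close>-th one: the fixed points are exactly the eigenvectors
  normalised by \<open>u s = 1\<close>.\<close>
definition eigen_iteration :: "real \<Rightarrow> ('a \<Rightarrow> real) \<Rightarrow> 'a \<Rightarrow> real" where
  "eigen_iteration t u p =
     (if p = s then 1 else if p \<in> I then t * B u p / (- d s + t * B u s + d p) else 0)"

lemma normalized_vectors_le: "u \<in> normalized_vectors \<Longrightarrow> \<bar>u p\<bar> \<le> 1"
  by (cases "p \<in> I") (auto simp: normalized_vectors_def)

lemma normalized_vectors_closed:
  assumes \<sigma>: "\<And>k. \<sigma> k \<in> normalized_vectors" and lim: "\<And>p. (\<lambda>k. \<sigma> k p) \<longlonglongrightarrow> u p"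
  shows "u \<in> normalized_vectors"
proof -
  have const: "u p = c" if "\<And>k. \<sigma> k p = c" for p c
    using lim[of p] that by (simp add: LIMSEQ_const_iff)
  have "\<bar>u p\<bar> \<le> 1" for p
    by (rule LIMSEQ_le_const2[OF tendsto_rabs[OF lim]]) (use \<sigma> normalized_vectors_le in blast)
  then show ?thesis using \<sigma> const by (auto simp: normalized_vectors_def)
qed

context
  fixes t :: real
  assumes t_pos: "0 < t" and t_small: "t * row_bound \<le> gap / 8"
begin

lemma B_normalized_le: "u \<in> normalized_vectors \<Longrightarrow> p \<in> I \<Longrightarrow> \<bar>t * B u p\<bar> \<le> t * row_bound"
  using B_le[of u 1 p] normalized_vectors_le t_pos by (simp add: abs_mult)

lemma iteration_denominator_ge:
  "u \<in> normalized_vectors \<Longrightarrow> p \<in> I \<Longrightarrow> p \<noteq> s \<Longrightarrow> 7 * gap / 8 \<le> - d s + t * B u s + d p"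
  using gap_le[of p] B_normalized_le[of u s] s_in_I t_small by linarith

lemma eigen_iteration_maps:
  assumes u: "u \<in> normalized_vectors"
  shows "eigen_iteration t u \<in> normalized_vectors"
proof -
  have "\<bar>eigen_iteration t u p\<bar> \<le> 1" if p: "p \<in> I" "p \<noteq> s" for p
  proof -
    have "\<bar>t * B u p / (- d s + t * B u s + d p)\<bar> \<le> (gap / 8) / (7 * gap / 8)"
      using iteration_denominator_ge[OF u p] B_normalized_le[OF u p(1)] t_small gap_pos
      by (intro abs_divide_le_of_le) auto
    also have "\<dots> \<le> 1" using gap_pos by simp
    finally show ?thesis using p by (simp add: eigen_iteration_def)
  qed
  then show ?thesis using s_in_I by (auto simp: normalized_vectors_def eigen_iteration_def)
qed

lemma contraction_factor_le:
  assumes "0 \<le> \<delta>"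
  shows "t * (4 / 3 * (row_bound * \<delta> / (7 * gap / 8)
      + row_bound * (t * (row_bound * \<delta>)) / (7 * gap / 8)\<^sup>2)) \<le> \<delta> / 2"
proof -
  define x where "x = t * row_bound / gap"
  have x: "0 \<le> x" "x \<le> 1 / 8"
    using t_pos row_bound_pos gap_pos t_small by (simp_all add: x_def field_simps)
  have "t * (4 / 3 * (row_bound * \<delta> / (7 * gap / 8)
      + row_bound * (t * (row_bound * \<delta>)) / (7 * gap / 8)\<^sup>2))
      = 4 / 3 * (8 / 7 * x + 64 / 49 * x\<^sup>2) * \<delta>"
    unfolding x_def using gap_pos by (simp add: field_simps power2_eq_square)
  also have "\<dots> \<le> 4 / 3 * (8 / 7 * (1 / 8) + 64 / 49 * (1 / 8)\<^sup>2) * \<delta>"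
    using x assms by (intro mult_right_mono mult_left_mono add_mono power_mono) auto
  also have "\<dots> \<le> \<delta> / 2" using assms by (simp add: power2_eq_square)
  finally show ?thesis .
qed

lemma iteration_quotient_diff_le:
  assumes u: "u \<in> normalized_vectors" and w: "w \<in> normalized_vectors"
    and \<delta>: "\<And>y. \<bar>u y - w y\<bar> \<le> \<delta>" and p: "p \<in> I" "p \<noteq> s"
  shows "\<bar>B u p / (- d s + t * B u s + d p) - B w p / (- d s + t * B w s + d p)\<bar>
    \<le> 4 / 3 * (row_bound * \<delta> / (7 * gap / 8) + row_bound * (t * (row_bound * \<delta>)) / (7 * gap / 8)\<^sup>2)"
proof (rule abs_quotient_diff_le)
  have dB: "\<bar>B u q - B w q\<bar> \<le> row_bound * \<delta>" if "q \<in> I" for q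
    unfolding B_diff using \<delta> that by (rule B_le)
  show "0 < 7 * gap / 8" "7 * gap / 8 \<le> - d s + t * B w s + d p"
    using gap_pos iteration_denominator_ge[OF w p] by simp_all
  show "3 * (7 * gap / 8) / 4 \<le> - d s + t * B u s + d p"
    using gap_pos iteration_denominator_ge[OF u p] by simp
  have "\<bar>t * B u s - t * B w s\<bar> \<le> t * (row_bound * \<delta>)"
    using dB[OF s_in_I] t_pos by (simp add: abs_mult right_diff_distrib[symmetric])
  then show "\<bar>- d s + t * B u s + d p - (- d s + t * B w s + d p)\<bar> \<le> t * (row_bound * \<delta>)"
    by simp
  show "\<bar>B u p - B w p\<bar> \<le> row_bound * \<delta>" using dB[OF p(1)] .
  show "\<bar>B w p\<bar> \<le> row_bound" using B_le[of w 1 p] w p normalized_vectors_le by simp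
qed

lemma eigen_iteration_contraction:
  assumes u: "u \<in> normalized_vectors" and w: "w \<in> normalized_vectors"
    and \<delta>: "\<And>y. \<bar>u y - w y\<bar> \<le> \<delta>"
  shows "\<bar>eigen_iteration t u p - eigen_iteration t w p\<bar> \<le> \<delta> / 2"
proof (cases "p \<in> I \<and> p \<noteq> s")
  case False
  then show ?thesis using order_trans[OF abs_ge_zero \<delta>] by (auto simp: eigen_iteration_def)
next
  case True
  then have p: "p \<in> I" "p \<noteq> s" by auto
  have "eigen_iteration t u p - eigen_iteration t w p
      = t * (B u p / (- d s + t * B u s + d p) - B w p / (- d s + t * B w s + d p))"
    using p by (simp add: eigen_iteration_def algebra_simps)
  then have "\<bar>eigen_iteration t u p - eigen_iteration t w p\<bar>
      = t * \<bar>B u p / (- d s + t * B u s + d p) - B w p / (- d s + t * B w s + d p)\<bar>"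
    using t_pos by (simp add: abs_mult)
  also have "\<dots> \<le> t * (4 / 3 * (row_bound * \<delta> / (7 * gap / 8)
      + row_bound * (t * (row_bound * \<delta>)) / (7 * gap / 8)\<^sup>2))"
    using iteration_quotient_diff_le[OF u w \<delta> p] t_pos by (intro mult_left_mono) auto
  also have "\<dots> \<le> \<delta> / 2" by (rule contraction_factor_le[OF order_trans[OF abs_ge_zero \<delta>]])
  finally show ?thesis .
qed

lemma exists_eigenvalue_near_bottom:
  "\<exists>e. is_eigenvalue_on I (A t) e \<and> - d s - t * row_bound \<le> e"
proof -
  have "\<exists>u\<in>normalized_vectors. eigen_iteration t u = u"
  proof (rule contraction_fixpoint_pointwise)
    show "(\<lambda>p. if p = s then 1 else 0) \<in> normalized_vectors"
      using s_in_I by (simp add: normalized_vectors_def)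
    show "eigen_iteration t u \<in> normalized_vectors" if "u \<in> normalized_vectors" for u
      using that by (rule eigen_iteration_maps)
    show "\<bar>u x\<bar> \<le> 1" if "u \<in> normalized_vectors" for u x
      using that by (rule normalized_vectors_le)
    show "\<bar>eigen_iteration t u x - eigen_iteration t w x\<bar> \<le> \<delta> / 2"
      if "u \<in> normalized_vectors" "w \<in> normalized_vectors" "\<And>y. \<bar>u y - w y\<bar> \<le> \<delta>" for u w \<delta> x
      using that by (rule eigen_iteration_contraction)
    show "u \<in> normalized_vectors"
      if "\<And>k. \<sigma> k \<in> normalized_vectors" "\<And>x. (\<lambda>k. \<sigma> k x) \<longlonglongrightarrow> u x" for \<sigma> u
      using that by (rule normalized_vectors_closed)
  qed
  then obtain u where u: "u \<in> normalized_vectors" and fixed: "eigen_iteration t u = u" by blast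
  define e where "e = - d s + t * B u s"
  have "A t u p = e * u p" if "p \<in> I" for p
  proof (cases "p = s")
    case True
    then show ?thesis using u by (simp add: A_def e_def normalized_vectors_def)
  next
    case False
    have "0 < e + d p" using iteration_denominator_ge[OF u that False] gap_pos by (simp add: e_def)
    moreover have "u p = t * B u p / (e + d p)"
      using fun_cong[OF fixed, of p] that False by (simp add: eigen_iteration_def e_def add_ac)
    ultimately show ?thesis by (simp add: A_def field_simps)
  qed
  moreover have "- d s - t * row_bound \<le> e"
    using B_normalized_le[OF u s_in_I] by (simp add: e_def)
  moreover have "\<forall>x. x \<notin> I \<longrightarrow> u x = 0" "u s \<noteq> 0" using u by (simp_all add: normalized_vectors_def)
  ultimately show ?thesis using s_in_I unfolding is_eigenvalue_on_def by blast
qed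

lemma largest_eigenvalue_A:
  shows "is_eigenvalue_on I (A t) (largest_eigenvalue I (A t))"
    and "- d s - t * row_bound \<le> largest_eigenvalue I (A t)"
proof -
  obtain e where e: "is_eigenvalue_on I (A t) e" "- d s - t * row_bound \<le> e"
    using exists_eigenvalue_near_bottom by blast
  have "largest_eigenvalue I (A t) \<in> {e. is_eigenvalue_on I (A t) e}"
    unfolding largest_eigenvalue_def by (rule Max_in[OF finite_eigenvalues_A]) (use e in blast)
  moreover have "e \<le> largest_eigenvalue I (A t)"
    unfolding largest_eigenvalue_def by (rule Max_ge[OF finite_eigenvalues_A]) (use e in blast)
  ultimately show "is_eigenvalue_on I (A t) (largest_eigenvalue I (A t))"
    and "- d s - t * row_bound \<le> largest_eigenvalue I (A t)"
    using e(2) by auto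
qed

lemma eigenvector_peaks_at_bottom:
  assumes e: "- d s - t * row_bound \<le> e" and v: "\<And>p. p \<in> I \<Longrightarrow> A t v p = e * v p"
    and "p \<in> I"
  shows "\<bar>v p\<bar> \<le> \<bar>v s\<bar>"
proof -
  define M where "M = Max ((\<lambda>p. \<bar>v p\<bar>) ` I)"
  have M_ge: "\<bar>v q\<bar> \<le> M" if "q \<in> I" for q using finite_I that by (simp add: M_def)
  have "M \<in> (\<lambda>p. \<bar>v p\<bar>) ` I" unfolding M_def using finite_I s_in_I by (intro Max_in) auto
  then obtain q where q: "q \<in> I" "\<bar>v q\<bar> = M" by blast
  have "M \<le> 0" if "q \<noteq> s"
  proof -
    have pos: "7 * gap / 8 \<le> e + d q" using gap_le[OF q(1) that] e t_small by linarith
    have "t * B v q = (e + d q) * v q" using v[OF q(1)] by (simp add: A_def algebra_simps)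
    moreover have "0 < e + d q" using pos gap_pos by linarith
    ultimately have "(e + d q) * M = \<bar>t * B v q\<bar>" using q(2) by (simp add: abs_mult)
    also have "\<dots> \<le> t * (row_bound * M)"
      using B_le[of v M q] M_ge q t_pos by (simp add: abs_mult)
    also have "\<dots> \<le> gap / 8 * M"
      using mult_right_mono[OF t_small abs_ge_zero[of "v q"]] q(2) by (simp add: mult.assoc)
    finally have "(e + d q) * M \<le> gap / 8 * M" .
    moreover have "7 * gap / 8 * M \<le> (e + d q) * M"
      using mult_right_mono[OF pos abs_ge_zero[of "v q"]] q(2) by simp
    ultimately have "gap * M \<le> 0" by linarith
    then show ?thesis using gap_pos by (simp add: mult_le_0_iff)
  qed
  then show ?thesis using M_ge[OF \<open>p \<in> I\<close>] q by (cases "q = s") auto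
qed

lemma largest_eigenvector_normalized:
  obtains u where "u \<in> normalized_vectors"
    and "\<And>p. p \<in> I \<Longrightarrow> A t u p = largest_eigenvalue I (A t) * u p"
proof -
  obtain v where v0: "\<forall>x. x \<notin> I \<longrightarrow> v x = 0" and nz: "\<exists>x\<in>I. v x \<noteq> 0"
    and v: "\<forall>x\<in>I. A t v x = largest_eigenvalue I (A t) * v x"
    using largest_eigenvalue_A(1) unfolding is_eigenvalue_on_def by blast
  have peak: "\<bar>v p\<bar> \<le> \<bar>v s\<bar>" if "p \<in> I" for p
    using eigenvector_peaks_at_bottom[OF largest_eigenvalue_A(2)] v that by blast
  then have vs: "v s \<noteq> 0" using nz by force
  define u where "u = (\<lambda>p. inverse (v s) * v p)"
  have "u \<in> normalized_vectors"
    using v0 vs peak by (auto simp: normalized_vectors_def u_def abs_mult field_simps)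
  moreover have "A t u p = largest_eigenvalue I (A t) * u p" if "p \<in> I" for p
    using v that unfolding u_def A_scale by simp
  ultimately show thesis by (rule that)
qed

lemma largest_eigenvalue_expansion:
  "\<bar>largest_eigenvalue I (A t) - (- d s + t * b s s + t\<^sup>2 * (\<Sum>q\<in>I - {s}. b s q * b q s / (d q - d s)))\<bar>
     \<le> 4 * row_bound ^ 3 / gap\<^sup>2 * t ^ 3"
proof -
  obtain u where u: "u \<in> normalized_vectors"
    and eig: "\<And>p. p \<in> I \<Longrightarrow> A t u p = largest_eigenvalue I (A t) * u p"
    by (rule largest_eigenvector_normalized) blast
  have "u s = 1" using u by (simp add: normalized_vectors_def)
  then show ?thesis
    by (rule eigenvalue_expansion[OF t_pos t_small _ normalized_vectors_le[OF u]]) (rule eig)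
qed

lemma unit_eigenvector_expansion:
  "\<exists>W. (\<forall>p. p \<notin> I \<longrightarrow> W p = 0) \<and> sqrt (\<Sum>p\<in>I. (W p)\<^sup>2) = 1
     \<and> (\<forall>p\<in>I. A t W p = largest_eigenvalue I (A t) * W p)
     \<and> (\<forall>p\<in>I. \<bar>W p - (if p = s then 1 else t * b p s / (d p - d s))\<bar>
          \<le> (1 + real (card I)) * (4 * row_bound\<^sup>2 / gap\<^sup>2) * t\<^sup>2)"
proof -
  obtain u where u: "u \<in> normalized_vectors"
    and eig: "\<And>p. p \<in> I \<Longrightarrow> A t u p = largest_eigenvalue I (A t) * u p"
    by (rule largest_eigenvector_normalized) blast
  have us: "u s = 1" and u0: "\<forall>p. p \<notin> I \<longrightarrow> u p = 0"
    using u by (simp_all add: normalized_vectors_def)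
  define r where "r = sqrt (\<Sum>q\<in>I. (u q)\<^sup>2)"
  note R = rescaled_eigvec_expansion[where u = u, OF t_pos t_small us normalized_vectors_le[OF u], folded r_def]
  have "A t (\<lambda>p. u p / r) p = largest_eigenvalue I (A t) * (u p / r)" if "p \<in> I" for p
    using A_scale[of t "inverse r" u p] eig[OF that] by (simp add: divide_inverse mult.commute)
  moreover have "\<bar>u p / r - (if p = s then 1 else t * b p s / (d p - d s))\<bar>
      \<le> (1 + real (card I)) * (4 * row_bound\<^sup>2 / gap\<^sup>2) * t\<^sup>2" if "p \<in> I" for p
    using R(2)[where e = "largest_eigenvalue I (A t)"] eig that by blast
  moreover have "(\<Sum>p\<in>I. (u p / r)\<^sup>2) = 1"
    using R(1)[where e = "largest_eigenvalue I (A t)"] eig by blast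
  ultimately show ?thesis using u0 by (intro exI[of _ "\<lambda>p. u p / r"]) auto
qed

end

lemma small_parameter: "0 < t \<Longrightarrow> t < gap / (8 * row_bound) \<Longrightarrow> t * row_bound \<le> gap / 8"
  using row_bound_pos by (simp add: field_simps)

lemma largest_eigenvalue_approx:
  "approx_to_order 3 (\<lambda>t. largest_eigenvalue I (A t))
     (\<lambda>t. - d s + t * b s s + t\<^sup>2 * (\<Sum>q\<in>I - {s}. b s q * b q s / (d q - d s)))"
proof (rule approx_to_orderI[where \<delta> = "gap / (8 * row_bound)" and C = "4 * row_bound ^ 3 / gap\<^sup>2"])
  show "0 < gap / (8 * row_bound)" using gap_pos row_bound_pos by simp
qed (rule largest_eigenvalue_expansion[OF _ small_parameter])

lemma unit_eigenvector_approx: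
  "\<exists>C>0. \<exists>\<delta>>0. \<forall>t. 0 < t \<and> t < \<delta> \<longrightarrow>
     (\<exists>W. (\<forall>p. p \<notin> I \<longrightarrow> W p = 0) \<and> sqrt (\<Sum>p\<in>I. (W p)\<^sup>2) = 1
       \<and> (\<forall>p\<in>I. A t W p = largest_eigenvalue I (A t) * W p)
       \<and> (\<forall>p\<in>I. \<bar>W p - (if p = s then 1 else t * b p s / (d p - d s))\<bar> \<le> C * t\<^sup>2))"
proof -
  have "0 < (1 + real (card I)) * (4 * row_bound\<^sup>2 / gap\<^sup>2)" "0 < gap / (8 * row_bound)"
    using gap_pos row_bound_pos by simp_all
  then show ?thesis using unit_eigenvector_expansion[OF _ small_parameter] by blast
qed

end

lemma entry_add: "entry (\<lambda>x. v x + w x) j l = entry v j l + entry w j l"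
  by (simp add: entry_def)

lemma entry_scale: "entry (\<lambda>x. c * v x) j l = c * entry v j l"
  by (simp add: entry_def)

lemma Theta1_add: "Theta1 N G (\<lambda>x. v x + w x) = (\<lambda>x. Theta1 N G v x + Theta1 N G w x)"
  by (auto simp: Theta1_def entry_add sum.distrib[symmetric] algebra_simps)

lemma Theta1_scale: "Theta1 N G (\<lambda>x. c * v x) = (\<lambda>x. c * Theta1 N G v x)"
  by (auto simp: Theta1_def entry_scale sum_distrib_left algebra_simps)

lemma finite_Tset: "finite (Tset N)"
  by (rule finite_subset[of _ "{..<N} \<times> {..<N}"]) (auto simp: Tset_def)

lemma Theta1_expansion:
  "\<forall>x. x \<notin> Tset N \<longrightarrow> S x = 0 \<Longrightarrow>
     Theta1 N G S p = (\<Sum>q\<in>Tset N. S q * Theta1 N G (\<lambda>x. if x = q then 1 else 0) p)"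
  by (rule linear_fun_expansion[OF finite_Tset Theta1_add Theta1_scale])

lemma Theta1_column:
  assumes jl: "(j, l) \<in> Tset N"
  shows "Theta1 N G (\<lambda>x. if x = (k, k) then 1 else 0) (j, l) =
    (if j = k \<and> l = k then -2 * (\<Sum>n\<in>{..<N} - {k}. G k n)
     else if j = k then 2 * G k l else if l = k then 2 * G j k else 0)"
proof (cases "j = k \<and> l = k")
  case True
  have "(\<Sum>n\<in>{..<N} - {j, l}. G l n * (entry (\<lambda>x. if x = (k, k) then 1 else 0) j n
        - entry (\<lambda>x. if x = (k, k) then 1 else 0) j l)
      + G j n * (entry (\<lambda>x. if x = (k, k) then 1 else 0) n l
        - entry (\<lambda>x. if x = (k, k) then 1 else 0) j l))
      = (\<Sum>n\<in>{..<N} - {k}. -2 * G k n)"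
    using True by (intro sum.cong) (auto simp: entry_def)
  then show ?thesis using jl True by (simp add: Theta1_def entry_def sum_distrib_left)
next
  case False
  have "(\<Sum>n\<in>{..<N} - {j, l}. G l n * (entry (\<lambda>x. if x = (k, k) then 1 else 0) j n
        - entry (\<lambda>x. if x = (k, k) then 1 else 0) j l)
      + G j n * (entry (\<lambda>x. if x = (k, k) then 1 else 0) n l
        - entry (\<lambda>x. if x = (k, k) then 1 else 0) j l)) = 0"
    using False by (intro sum.neutral) (auto simp: entry_def)
  then show ?thesis using jl False by (auto simp: Theta1_def Tset_def entry_def)
qed

lemma Theta1_row:
  assumes ab: "(a, b) \<in> Tset N" "(a, b) \<noteq> (k, k)" and "k < N"
  shows "Theta1 N G (\<lambda>x. if x = (a, b) then 1 else 0) (k, k) =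
    (if a = k then 2 * G k b else if b = k then 2 * G k a else 0)"
proof -
  have ab': "a \<le> b" "b < N" using ab by (auto simp: Tset_def)
  define E where "E = entry (\<lambda>x. if x = (a, b) then 1 else 0)"
  have "E k k = 0" using ab by (auto simp: E_def entry_def)
  then have "Theta1 N G (\<lambda>x. if x = (a, b) then 1 else 0) (k, k)
      = (\<Sum>n\<in>{..<N} - {k}. G k n * E k n + G k n * E n k)"
    using \<open>k < N\<close> by (simp add: Theta1_def Tset_def E_def)
  also have "\<dots> = (\<Sum>n\<in>{..<N} - {k}. if n = (if a = k then b else a) then
      (if a = k \<or> b = k then 2 * G k n else 0) else 0)"
    using ab ab' by (intro sum.cong) (auto simp: E_def entry_def)
  also have "\<dots> = (if a = k then 2 * G k b else if b = k then 2 * G k a else 0)"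
    using ab ab' by (auto simp: sum.delta)
  finally show ?thesis .
qed

locale rate_setting =
  fixes N :: nat and G :: "nat \<Rightarrow> nat \<Rightarrow> real" and Lam :: "nat \<Rightarrow> real" and js :: nat
  assumes rate: "rate_matrix N G" and js_lt: "js < N"
    and Lam_gap: "\<And>j. j < N \<Longrightarrow> j \<noteq> js \<Longrightarrow> Lam js < Lam j"
begin

definition theta_entry :: "nat \<times> nat \<Rightarrow> nat \<times> nat \<Rightarrow> real" where
  "theta_entry p q = Theta1 N G (\<lambda>x. if x = q then 1 else 0) p"

definition pair_rate :: "nat \<times> nat \<Rightarrow> real" where
  "pair_rate p = Lam (fst p) + Lam (snd p)"

definition exit_rate :: real where
  "exit_rate = (\<Sum>j\<in>{..<N} - {js}. G j js)"

definition second_order_sum :: real where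
  "second_order_sum = (\<Sum>j\<in>{..<N} - {js}. (G j js)\<^sup>2 / (Lam j - Lam js))"

sublocale states: gapped_perturbation "{..<N}" js G Lam
  using js_lt Lam_gap by unfold_locales auto

sublocale pairs: gapped_perturbation "Tset N" "(js, js)" theta_entry pair_rate
proof
  show "finite (Tset N)" by (rule finite_Tset)
  show "(js, js) \<in> Tset N" using js_lt by (simp add: Tset_def)
  fix p assume p: "p \<in> Tset N" "p \<noteq> (js, js)"
  obtain j l where jl: "p = (j, l)" by (cases p)
  have "j < N" "l < N" using p jl by (auto simp: Tset_def)
  then have "Lam js \<le> Lam j" "Lam js \<le> Lam l"
    "j \<noteq> js \<Longrightarrow> Lam js < Lam j" "l \<noteq> js \<Longrightarrow> Lam js < Lam l"
    using Lam_gap by (auto simp: le_less)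
  moreover have "j \<noteq> js \<or> l \<noteq> js" using p jl by auto
  ultimately show "pair_rate (js, js) < pair_rate p" unfolding pair_rate_def jl by auto
qed

lemma G_sym: "j < N \<Longrightarrow> l < N \<Longrightarrow> G j l = G l j"
  using rate by (auto simp: rate_matrix_def)

lemma row_sum_eq_exit_rate: "(\<Sum>n\<in>{..<N} - {js}. G js n) = exit_rate"
  unfolding exit_rate_def using G_sym js_lt by (intro sum.cong) auto

lemma G_diag: "G js js = - exit_rate"
  using rate js_lt row_sum_eq_exit_rate by (auto simp: rate_matrix_def)

lemma theta_entry_diag: "theta_entry (js, js) (js, js) = -2 * exit_rate"
  using Theta1_column[of js js N G js] js_lt row_sum_eq_exit_rate
  by (simp add: theta_entry_def Tset_def)

lemma states_second_order:
  "(\<Sum>q\<in>{..<N} - {js}. G js q * G q js / (Lam q - Lam js)) = second_order_sum"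
  unfolding second_order_sum_def using G_sym js_lt by (intro sum.cong) (auto simp: power2_eq_square)

lemma theta_entry_to_bottom:
  assumes "(a, b) \<in> Tset N" "(a, b) \<noteq> (js, js)"
  shows "theta_entry (a, b) (js, js) = (if a = js then 2 * G js b else if b = js then 2 * G a js else 0)"
  using Theta1_column[OF assms(1), of G js] assms(2) by (auto simp: theta_entry_def)

lemma theta_entry_from_bottom:
  assumes "(a, b) \<in> Tset N" "(a, b) \<noteq> (js, js)"
  shows "theta_entry (js, js) (a, b) = (if a = js then 2 * G js b else if b = js then 2 * G js a else 0)"
  using Theta1_row[OF assms js_lt] by (simp add: theta_entry_def)

lemma pair_with_bottom_in_image:
  assumes "(a, b) \<in> Tset N" "(a, b) \<noteq> (js, js)" "a = js \<or> b = js"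
  shows "(a, b) \<in> (\<lambda>j. (min j js, max j js)) ` ({..<N} - {js})"
proof (cases "a = js")
  case True
  then have "(a, b) = (min b js, max b js)" "b \<in> {..<N} - {js}" using assms by (auto simp: Tset_def)
  then show ?thesis by blast
next
  case False
  then have "(a, b) = (min a js, max a js)" "a \<in> {..<N} - {js}" using assms by (auto simp: Tset_def)
  then show ?thesis by blast
qed

lemma pair_coupling_term:
  assumes "j < N" "j \<noteq> js"
  shows "theta_entry (js, js) (min j js, max j js) * theta_entry (min j js, max j js) (js, js)
      / (pair_rate (min j js, max j js) - pair_rate (js, js)) = 4 * ((G j js)\<^sup>2 / (Lam j - Lam js))"
proof -
  have G: "G js j = G j js" using G_sym[of js j] assms js_lt by simp
  have "j < js \<or> js < j" using assms by auto
  then show ?thesis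
  proof
    assume "j < js"
    then have "(j, js) \<in> Tset N" "(j, js) \<noteq> (js, js)" using js_lt by (auto simp: Tset_def)
    then show ?thesis using \<open>j < js\<close> theta_entry_to_bottom theta_entry_from_bottom G
      by (simp add: pair_rate_def power2_eq_square)
  next
    assume "js < j"
    then have "(js, j) \<in> Tset N" "(js, j) \<noteq> (js, js)" using assms by (auto simp: Tset_def)
    then show ?thesis using \<open>js < j\<close> theta_entry_to_bottom theta_entry_from_bottom G
      by (simp add: pair_rate_def power2_eq_square)
  qed
qed

text \<open>Only the pairs sharing an index with \<open>(js, js)\<close> couple to it, and these are the images of
  the states \<open>j \<noteq> js\<close> under \<open>j \<mapsto> (min j js, max j js)\<close>.\<close>
lemma pairs_second_order:
  "(\<Sum>q\<in>Tset N - {(js, js)}. theta_entry (js, js) q * theta_entry q (js, js)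
      / (pair_rate q - pair_rate (js, js))) = 4 * second_order_sum"
proof -
  define h where "h j = (min j js, max j js)" for j
  define f where "f q = theta_entry (js, js) q * theta_entry q (js, js) / (pair_rate q - pair_rate (js, js))"
    for q
  have inj: "inj_on h ({..<N} - {js})"
    by (auto simp: inj_on_def h_def min_def max_def split: if_splits)
  have img: "h ` ({..<N} - {js}) \<subseteq> Tset N - {(js, js)}"
    using js_lt by (auto simp: h_def Tset_def)
  have "f (a, b) = 0" if "(a, b) \<in> Tset N - {(js, js)} - h ` ({..<N} - {js})" for a b
    using that pair_with_bottom_in_image[of a b] theta_entry_from_bottom[of a b]
    by (auto simp: f_def h_def)
  then have "(\<Sum>q\<in>Tset N - {(js, js)}. f q) = (\<Sum>q\<in>h ` ({..<N} - {js}). f q)"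
    using finite_Tset img by (intro sum.mono_neutral_right) auto
  also have "\<dots> = (\<Sum>j\<in>{..<N} - {js}. f (h j))" by (rule sum.reindex[OF inj, unfolded comp_def])
  also have "\<dots> = (\<Sum>j\<in>{..<N} - {js}. 4 * ((G j js)\<^sup>2 / (Lam j - Lam js)))"
    using pair_coupling_term by (intro sum.cong) (auto simp: f_def h_def)
  finally show ?thesis by (simp add: f_def second_order_sum_def sum_distrib_left)
qed

lemma Theta1_Psi_eq_pairs_A:
  "\<forall>x. x \<notin> Tset N \<longrightarrow> S x = 0 \<Longrightarrow> p \<in> Tset N \<Longrightarrow>
     \<theta> * Theta1 N G S p - Psi N Lam S p = pairs.A \<theta> S p"
  using Theta1_expansion[of N S G p]
  by (cases p) (simp add: pairs.A_def pairs.B_def Psi_def pair_rate_def theta_entry_def mult.commute)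

lemma mu_eq: "mu N G Lam \<theta> = - largest_eigenvalue (Tset N) (pairs.A \<theta>)"
proof -
  have "is_eigenvalue_on (Tset N) (\<lambda>S p. \<theta> * Theta1 N G S p - Psi N Lam S p)
      = is_eigenvalue_on (Tset N) (pairs.A \<theta>)"
    by (rule is_eigenvalue_on_cong) (rule Theta1_Psi_eq_pairs_A)
  then show ?thesis unfolding mu_def largest_eigenvalue_def by simp
qed

lemma lam_eq: "lam N G Lam \<theta> = - largest_eigenvalue {..<N} (states.A \<theta>)"
proof -
  have "(\<lambda>v j. \<theta> * (\<Sum>l<N. G j l * v l) - Lam j * v j) = states.A \<theta>"
    by (intro ext) (simp add: states.A_def states.B_def)
  then show ?thesis by (simp add: lam_def)
qed

lemma mu_approx:
  "approx_to_order 3 (mu N G Lam) (\<lambda>\<theta>. 2 * Lam js + 2 * \<theta> * exit_rate - 4 * \<theta>\<^sup>2 * second_order_sum)"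
  by (rule approx_to_order_combine[OF pairs.largest_eigenvalue_approx pairs.largest_eigenvalue_approx,
        where a = "-1" and c = 0])
    (simp only: theta_entry_diag pairs_second_order, simp add: mu_eq pair_rate_def algebra_simps)

lemma lam_approx:
  "approx_to_order 3 (lam N G Lam) (\<lambda>\<theta>. Lam js + \<theta> * exit_rate - \<theta>\<^sup>2 * second_order_sum)"
  by (rule approx_to_order_combine[OF states.largest_eigenvalue_approx states.largest_eigenvalue_approx,
        where a = "-1" and c = 0])
    (simp only: G_diag states_second_order, simp add: lam_eq algebra_simps)

lemma W_first_order_eq:
  assumes "p \<in> Tset N"
  shows "W0 js p + \<theta> * W1 G Lam js p
    = (if p = (js, js) then 1 else \<theta> * theta_entry p (js, js) / (pair_rate p - pair_rate (js, js)))"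
proof -
  obtain j l where jl: "p = (j, l)" "j \<le> l" "l < N" using assms by (cases p) (auto simp: Tset_def)
  consider "j = js" "l = js" | "j = js" "js < l" | "j < js" "l = js" | "j \<noteq> js" "l \<noteq> js"
    using jl by linarith
  then show ?thesis
  proof cases
    case 1
    then show ?thesis using jl by (simp add: W0_def W1_def)
  next
    case 2
    then show ?thesis using jl assms theta_entry_to_bottom[of j l] by (simp add: W0_def W1_def pair_rate_def)
  next
    case 3
    then show ?thesis using jl assms theta_entry_to_bottom[of j l] by (simp add: W0_def W1_def pair_rate_def)
  next
    case 4
    then show ?thesis using jl assms theta_entry_to_bottom[of j l] by (simp add: W0_def W1_def)
  qed
qed

lemma mu_eigenvector_approx:
  "\<exists>C>0. \<exists>\<delta>>0. \<forall>\<theta>. 0 < \<theta> \<and> \<theta> < \<delta> \<longrightarrow>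
     (\<exists>W :: nat \<times> nat \<Rightarrow> real.
        (\<forall>p. p \<notin> Tset N \<longrightarrow> W p = 0) \<and>
        sqrt (\<Sum>p \<in> Tset N. (W p)\<^sup>2) = 1 \<and>
        (\<forall>p \<in> Tset N. \<theta> * Theta1 N G W p - Psi N Lam W p = - mu N G Lam \<theta> * W p) \<and>
        (\<forall>p \<in> Tset N. \<bar>W p - (W0 js p + \<theta> * W1 G Lam js p)\<bar> \<le> C * \<theta>\<^sup>2))"
proof -
  obtain C \<delta> where "0 < C" "0 < \<delta>" and approx: "\<And>\<theta>. 0 < \<theta> \<Longrightarrow> \<theta> < \<delta> \<Longrightarrow>
      \<exists>W. (\<forall>p. p \<notin> Tset N \<longrightarrow> W p = 0) \<and> sqrt (\<Sum>p\<in>Tset N. (W p)\<^sup>2) = 1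
        \<and> (\<forall>p\<in>Tset N. pairs.A \<theta> W p = largest_eigenvalue (Tset N) (pairs.A \<theta>) * W p)
        \<and> (\<forall>p\<in>Tset N. \<bar>W p - (if p = (js, js) then 1
            else \<theta> * theta_entry p (js, js) / (pair_rate p - pair_rate (js, js)))\<bar> \<le> C * \<theta>\<^sup>2)"
    using pairs.unit_eigenvector_approx by blast
  have "\<exists>W :: nat \<times> nat \<Rightarrow> real. (\<forall>p. p \<notin> Tset N \<longrightarrow> W p = 0) \<and> sqrt (\<Sum>p \<in> Tset N. (W p)\<^sup>2) = 1
      \<and> (\<forall>p \<in> Tset N. \<theta> * Theta1 N G W p - Psi N Lam W p = - mu N G Lam \<theta> * W p)
      \<and> (\<forall>p \<in> Tset N. \<bar>W p - (W0 js p + \<theta> * W1 G Lam js p)\<bar> \<le> C * \<theta>\<^sup>2)"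
    if \<theta>: "0 < \<theta>" "\<theta> < \<delta>" for \<theta>
  proof -
    obtain W where W0: "\<forall>p. p \<notin> Tset N \<longrightarrow> W p = 0" and W1: "sqrt (\<Sum>p\<in>Tset N. (W p)\<^sup>2) = 1"
      and W2: "\<forall>p\<in>Tset N. pairs.A \<theta> W p = largest_eigenvalue (Tset N) (pairs.A \<theta>) * W p"
      and W3: "\<forall>p\<in>Tset N. \<bar>W p - (if p = (js, js) then 1
            else \<theta> * theta_entry p (js, js) / (pair_rate p - pair_rate (js, js)))\<bar> \<le> C * \<theta>\<^sup>2"
      using approx[OF \<theta>] by blast
    show ?thesis
      using W0 W1 W2 W3 Theta1_Psi_eq_pairs_A[OF W0] by (intro exI[of _ W]) (simp add: mu_eq W_first_order_eq)
  qed
  then show ?thesis using \<open>0 < C\<close> \<open>0 < \<delta>\<close> by blast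
qed

lemma second_order_sum_pos:
  assumes "2 \<le> N" and "irreducible_rate N G"
  shows "0 < second_order_sum"
proof -
  define l where "l = (if js = 0 then 1 else 0 :: nat)"
  have l: "l < N" "l \<noteq> js" using assms(1) by (auto simp: l_def)
  define R where "R = {(a, b). a < N \<and> b < N \<and> a \<noteq> b \<and> G a b > 0}"
  have "(js, l) \<in> R\<^sup>*" using assms(2) js_lt l unfolding irreducible_rate_def R_def by blast
  then obtain y where "(js, y) \<in> R" using l(2) by (cases rule: converse_rtranclE) auto
  then have y: "y < N" "y \<noteq> js" "0 < G y js" using G_sym[of js y] js_lt by (auto simp: R_def)
  have "0 < (G y js)\<^sup>2 / (Lam y - Lam js)" using y Lam_gap by simp
  also have "\<dots> \<le> second_order_sum"
    unfolding second_order_sum_def using y Lam_gap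
    by (intro member_le_sum) (auto intro!: divide_nonneg_pos)
  finally show ?thesis .
qed

end

theorem mainTheorem10:
  fixes N :: nat and G :: "nat \<Rightarrow> nat \<Rightarrow> real" and Lam :: "nat \<Rightarrow> real" and js :: nat
  assumes "N \<ge> 2"
    and "rate_matrix N G" and "irreducible_rate N G"
    and "\<forall>j<N. Lam j \<ge> 0"
    and "js < N" and "\<forall>j<N. j \<noteq> js \<longrightarrow> Lam j > Lam js"
  shows
    "(\<exists>C>0. \<exists>\<delta>>0. \<forall>\<theta>. 0 < \<theta> \<and> \<theta> < \<delta> \<longrightarrow>
        \<bar>mu N G Lam \<theta> - (2 * Lam js + 2 * \<theta> * (\<Sum>j \<in> {..<N} - {js}. G j js)
           - 4 * \<theta>^2 * (\<Sum>j \<in> {..<N} - {js}. (G j js)^2 / (Lam j - Lam js)))\<bar> \<le> C * \<theta>^3)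
   \<and> (\<exists>C>0. \<exists>\<delta>>0. \<forall>\<theta>. 0 < \<theta> \<and> \<theta> < \<delta> \<longrightarrow>
        (\<exists>W :: nat \<times> nat \<Rightarrow> real.
           (\<forall>p. p \<notin> Tset N \<longrightarrow> W p = 0) \<and>
           sqrt (\<Sum>p \<in> Tset N. (W p)^2) = 1 \<and>
           (\<forall>p \<in> Tset N. \<theta> * Theta1 N G W p - Psi N Lam W p = - mu N G Lam \<theta> * W p) \<and>
           (\<forall>p \<in> Tset N. \<bar>W p - (W0 js p + \<theta> * W1 G Lam js p)\<bar> \<le> C * \<theta>^2)))
   \<and> (\<exists>C>0. \<exists>\<delta>>0. \<forall>\<theta>. 0 < \<theta> \<and> \<theta> < \<delta> \<longrightarrow>
        \<bar>mu N G Lam \<theta> - 2 * lam N G Lam \<theta>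
           - (- 2 * \<theta>^2 * (\<Sum>j \<in> {..<N} - {js}. (G j js)^2 / (Lam j - Lam js)))\<bar> \<le> C * \<theta>^3)
   \<and> (\<exists>\<delta>>0. \<forall>\<theta>. 0 < \<theta> \<and> \<theta> < \<delta> \<longrightarrow> mu N G Lam \<theta> - 2 * lam N G Lam \<theta> < 0)"
proof -
  interpret rate_setting N G Lam js
    using assms(2,5,6) by unfold_locales auto
  have gap: "approx_to_order 3 (\<lambda>\<theta>. mu N G Lam \<theta> - 2 * lam N G Lam \<theta>)
      (\<lambda>\<theta>. - 2 * \<theta>^2 * second_order_sum)"
    by (rule approx_to_order_combine[OF mu_approx lam_approx, where a = 1 and c = "-2"])
      (simp add: algebra_simps)
  have negative: "\<exists>\<delta>>0. \<forall>\<theta>. 0 < \<theta> \<and> \<theta> < \<delta> \<longrightarrow> mu N G Lam \<theta> - 2 * lam N G Lam \<theta> < 0"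
    using second_order_sum_pos[OF assms(1,3)]
    by (intro approx_to_order_negative[OF gap, of "2 * second_order_sum"]) auto
  show ?thesis
    using mu_approx mu_eigenvector_approx gap negative
    unfolding approx_to_order_def exit_rate_def second_order_sum_def by blast
qed

end
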